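(* Let $k$ be a field of characteristic $\neq 2$ and let $\mathcal O=v_0k[t]\oplus v_1k[t]\oplus v_2k[t]$ be the Lie algebra described in the context. Then: (i) $\mathcal O$ is generated, as a Lie algebra over $k$, by $v_0,v_1,v_2$; (ii) the centroid of $\mathcal O$ is isomorphic to $k[t]$ (every element of the centroid is the multiplication by some polynomial $p(t)\in k[t]$); (iii) $\mathcal O$ is prime.
   Context: $\mathcal O$ is the Lie algebra over $k$ which is a free $k[t]$-module with basis $v_0,v_1,v_2$, whose bracket is $k[t]$-bilinear and determined by $[v_0,v_1]=-v_2(t-1)$, $[v_1,v_2]=-v_0$, $[v_2,v_0]=v_1t$. (Concretely, in $\mathfrak{sl}_2(k)\otimes k[t,t^{-1},(1-t)^{-1}]$ it is the subalgebra $u_0(t-1)k[t]\oplus u_1k[t]\oplus u_2tk[t]$ with $v_0=u_0(t-1)$, $v_1=u_1$, $v_2=u_2t$, and it is isomorphic to the Onsager algebra, the Lie algebra with generators $A,B$ and relations $[A,[A,[A,B]]]=4[A,B]$, $[B,[B,[B,A]]]=4[B,A]$.) The centroid of a Lie algebra $L$ over $k$ is $\{f\in\mathrm{End}_k(L): f([x,y])=[x,f(y)]\ \forall x,y\in L\}$. A Lie algebra is prime if the bracket of two nonzero ideals is never zero. *)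

theory Defs
  imports "HOL-Computational_Algebra.Polynomial"
begin

text \<open>Elements of the Onsager algebra O = v0 k[t] + v1 k[t] + v2 k[t] are represented
by their coordinate triples (p0, p1, p2) with respect to the k[t]-basis v0, v1, v2.\<close>

type_synonym 'a ons = "'a poly \<times> 'a poly \<times> 'a poly"

definition ons_v0 :: "'a::field ons" where "ons_v0 = (1, 0, 0)"
definition ons_v1 :: "'a::field ons" where "ons_v1 = (0, 1, 0)"
definition ons_v2 :: "'a::field ons" where "ons_v2 = (0, 0, 1)"

definition ons_zero :: "'a::field ons" where "ons_zero = (0, 0, 0)"

definition ons_add :: "'a::field ons \<Rightarrow> 'a ons \<Rightarrow> 'a ons" where
  "ons_add x y = (case x of (a0, a1, a2) \<Rightarrow> case y of (b0, b1, b2) \<Rightarrow> (a0 + b0, a1 + b1, a2 + b2))"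

definition ons_smult :: "'a::field \<Rightarrow> 'a ons \<Rightarrow> 'a ons" where
  "ons_smult c x = (case x of (a0, a1, a2) \<Rightarrow> (smult c a0, smult c a1, smult c a2))"

definition ons_pmult :: "'a::field poly \<Rightarrow> 'a ons \<Rightarrow> 'a ons" where
  "ons_pmult p x = (case x of (a0, a1, a2) \<Rightarrow> (p * a0, p * a1, p * a2))"

text \<open>The k[t]-bilinear bracket determined by
  [v0,v1] = -v2 (t-1), [v1,v2] = -v0, [v2,v0] = v1 t.\<close>
definition ons_br :: "'a::field ons \<Rightarrow> 'a ons \<Rightarrow> 'a ons" where
  "ons_br x y = (case x of (a0, a1, a2) \<Rightarrow> case y of (b0, b1, b2) \<Rightarrow>
     (a2 * b1 - a1 * b2,
      [:0, 1:] * (a2 * b0 - a0 * b2),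
      - ([:-1, 1:] * (a0 * b1 - a1 * b0))))"

inductive_set ons_lie_gen :: "'a::field ons set \<Rightarrow> 'a ons set" for S where
  base: "x \<in> S \<Longrightarrow> x \<in> ons_lie_gen S"
| zero: "ons_zero \<in> ons_lie_gen S"
| add: "x \<in> ons_lie_gen S \<Longrightarrow> y \<in> ons_lie_gen S \<Longrightarrow> ons_add x y \<in> ons_lie_gen S"
| smult: "x \<in> ons_lie_gen S \<Longrightarrow> ons_smult c x \<in> ons_lie_gen S"
| br: "x \<in> ons_lie_gen S \<Longrightarrow> y \<in> ons_lie_gen S \<Longrightarrow> ons_br x y \<in> ons_lie_gen S"

inductive_set ons_kspan :: "'a::field ons set \<Rightarrow> 'a ons set" for S where
  base: "x \<in> S \<Longrightarrow> x \<in> ons_kspan S"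
| zero: "ons_zero \<in> ons_kspan S"
| add: "x \<in> ons_kspan S \<Longrightarrow> y \<in> ons_kspan S \<Longrightarrow> ons_add x y \<in> ons_kspan S"
| smult: "x \<in> ons_kspan S \<Longrightarrow> ons_smult c x \<in> ons_kspan S"

definition ons_klinear :: "('a::field ons \<Rightarrow> 'a ons) \<Rightarrow> bool" where
  "ons_klinear f \<longleftrightarrow> (\<forall>x y. f (ons_add x y) = ons_add (f x) (f y)) \<and>
                      (\<forall>c x. f (ons_smult c x) = ons_smult c (f x))"

definition ons_centroid :: "('a::field ons \<Rightarrow> 'a ons) set" where
  "ons_centroid = {f. ons_klinear f \<and> (\<forall>x y. f (ons_br x y) = ons_br x (f y))}"

definition ons_ideal :: "'a::field ons set \<Rightarrow> bool" where
  "ons_ideal I \<longleftrightarrow> ons_zero \<in> I \<and> (\<forall>x\<in>I. \<forall>y\<in>I. ons_add x y \<in> I) \<and>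
     (\<forall>c. \<forall>x\<in>I. ons_smult c x \<in> I) \<and> (\<forall>x y. y \<in> I \<longrightarrow> ons_br x y \<in> I)"

definition ons_ideal_br :: "'a::field ons set \<Rightarrow> 'a ons set \<Rightarrow> 'a ons set" where
  "ons_ideal_br I J = ons_kspan {ons_br x y | x y. x \<in> I \<and> y \<in> J}"

definition ons_prime :: "'a::field itself \<Rightarrow> bool" where
  "ons_prime _ \<longleftrightarrow> (\<forall>I J :: 'a ons set. ons_ideal I \<longrightarrow> ons_ideal J \<longrightarrow>
      I \<noteq> {ons_zero} \<longrightarrow> J \<noteq> {ons_zero} \<longrightarrow> ons_ideal_br I J \<noteq> {ons_zero})"

end

theory Submission
  imports Defs
begin

(* Generation: the subalgebra generated by v0, v1, v2 contains p v_i for constant p, and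
   bracketing with the generators multiplies coordinates by t, e.g. [v2, p v0] = t p v1;
   induction on p gives all of O.
   Centroid: for f in the centroid, [x, f x] = f [x, x] = 0 forces f v_i = p_i v_i, the relations
   v0 = -[v1, v2] and [v0, v1] = -[v1, v0] force p0 = p1 = p2, and f agrees with multiplication
   by p0 on the generated subalgebra, which is O.
   Primeness: iterated brackets with the generators turn any nonzero element of an ideal into a
   nonzero q v0; then [q v0, (t - 1) r v2] = -t (t - 1) q r v1 is nonzero since k[t] is a domain.
   None of this uses char k \<noteq> 2, which is only needed to identify O with the Onsager algebra. *)

lemma ons_smult_zero: "ons_smult 0 x = ons_zero"
  by (cases x) (simp add: ons_smult_def ons_zero_def)

lemma ons_br_self: "ons_br x x = ons_zero"
  by (cases x) (simp add: ons_br_def ons_zero_def algebra_simps)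

lemma ons_br_anticomm: "ons_br x y = ons_smult (-1) (ons_br y x)"
  by (cases x; cases y) (simp add: ons_br_def ons_smult_def algebra_simps)

lemma ons_br_pmult_right: "ons_br x (ons_pmult p y) = ons_pmult p (ons_br x y)"
  by (cases x; cases y) (simp add: ons_br_def ons_pmult_def algebra_simps)

lemma ons_pmult_add: "ons_pmult p (ons_add x y) = ons_add (ons_pmult p x) (ons_pmult p y)"
  by (cases x; cases y) (simp add: ons_add_def ons_pmult_def algebra_simps)

lemma ons_pmult_smult: "ons_pmult p (ons_smult c x) = ons_smult c (ons_pmult p x)"
  by (cases x) (simp add: ons_smult_def ons_pmult_def algebra_simps)

definition ons_axes :: "'a::field poly \<Rightarrow> 'a ons set" where
  "ons_axes p = {(p, 0, 0), (0, p, 0), (0, 0, p)}"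

context
  fixes S :: "'a::field ons set"
  assumes basis_in_gen: "{ons_v0, ons_v1, ons_v2} \<subseteq> ons_lie_gen S"
begin

lemma ons_axes_const_in_lie_gen: "ons_axes [:c:] \<subseteq> ons_lie_gen S"
proof -
  have "ons_axes [:c:] = ons_smult c ` {ons_v0, ons_v1, ons_v2}"
    by (simp add: ons_axes_def ons_smult_def ons_v0_def ons_v1_def ons_v2_def)
  then show ?thesis
    using basis_in_gen by (auto intro: ons_lie_gen.smult)
qed

lemma ons_axes_add_in_lie_gen:
  assumes "ons_axes p \<subseteq> ons_lie_gen S" and "ons_axes q \<subseteq> ons_lie_gen S"
  shows "ons_axes (p + q) \<subseteq> ons_lie_gen S"
proof -
  have "ons_add (p, 0, 0) (q, 0, 0) = (p + q, 0, 0)" "ons_add (0, p, 0) (0, q, 0) = (0, p + q, 0)"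
    "ons_add (0, 0, p) (0, 0, q) = (0, 0, p + q)"
    by (simp_all add: ons_add_def)
  then show ?thesis
    using assms by (simp add: ons_axes_def) (metis ons_lie_gen.add)
qed

lemma ons_axes_mult_t_in_lie_gen:
  assumes p: "ons_axes p \<subseteq> ons_lie_gen S"
  shows "ons_axes ([:0, 1:] * p) \<subseteq> ons_lie_gen S"
proof -
  let ?tp = "[:0, 1:] * p"
  have v: "ons_v0 \<in> ons_lie_gen S" "ons_v1 \<in> ons_lie_gen S" "ons_v2 \<in> ons_lie_gen S"
    using basis_in_gen by auto
  have "ons_br ons_v2 (p, 0, 0) = (0, ?tp, 0)"
    by (simp add: ons_br_def ons_v2_def)
  then have v1: "(0, ?tp, 0) \<in> ons_lie_gen S"
    using p v by (metis insert_subset ons_axes_def ons_lie_gen.br)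
  \<comment> \<open>t p = p + (t - 1) p, and [v0, p v1] = -(t - 1) p v2\<close>
  have "ons_add (0, 0, p) (ons_smult (-1) (ons_br ons_v0 (0, p, 0))) = (0, 0, ?tp)"
    by (simp add: ons_br_def ons_v0_def ons_add_def ons_smult_def algebra_simps)
  then have v2: "(0, 0, ?tp) \<in> ons_lie_gen S"
    using p v by (metis insert_subset ons_axes_def ons_lie_gen.add ons_lie_gen.br ons_lie_gen.smult)
  have "ons_smult (-1) (ons_br ons_v1 (0, 0, ?tp)) = (?tp, 0, 0)"
    by (simp add: ons_br_def ons_v1_def ons_smult_def)
  then have v0: "(?tp, 0, 0) \<in> ons_lie_gen S"
    using v2 v by (metis ons_lie_gen.br ons_lie_gen.smult)
  show ?thesis
    using v0 v1 v2 by (simp add: ons_axes_def)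
qed

lemma ons_axes_in_lie_gen: "ons_axes p \<subseteq> ons_lie_gen S"
proof (induction p)
  case 0
  then show ?case
    using ons_axes_const_in_lie_gen[of 0] by simp
next
  case (pCons a p)
  have "pCons a p = [:a:] + [:0, 1:] * p"
    by simp
  then show ?case
    using ons_axes_add_in_lie_gen ons_axes_const_in_lie_gen ons_axes_mult_t_in_lie_gen pCons
    by metis
qed

lemma ons_lie_gen_eq_UNIV: "ons_lie_gen S = UNIV"
proof -
  have "(p0, p1, p2) \<in> ons_lie_gen S" for p0 p1 p2 :: "'a poly"
  proof -
    have "(p0, p1, p2) = ons_add (p0, 0, 0) (ons_add (0, p1, 0) (0, 0, p2))"
      by (simp add: ons_add_def)
    then show ?thesis
      using ons_axes_in_lie_gen by (metis insert_subset ons_axes_def ons_lie_gen.add)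
  qed
  then show ?thesis
    by auto
qed

end

lemma ons_lie_gen_basis_eq_UNIV: "ons_lie_gen {ons_v0, ons_v1, ons_v2} = UNIV"
  by (rule ons_lie_gen_eq_UNIV) (auto intro: ons_lie_gen.base)

lemma ons_pmult_in_centroid: "ons_pmult p \<in> ons_centroid"
  by (simp add: ons_centroid_def ons_klinear_def ons_br_pmult_right ons_pmult_add ons_pmult_smult)

lemma inj_ons_pmult: "inj ons_pmult"
proof (rule injI)
  fix p q :: "'a::field poly"
  assume "ons_pmult p = ons_pmult q"
  then have "ons_pmult p ons_v0 = ons_pmult q ons_v0"
    by simp
  then show "p = q"
    by (simp add: ons_pmult_def ons_v0_def)
qed

lemma ons_centroidD:
  assumes "f \<in> ons_centroid"
  shows "f (ons_add x y) = ons_add (f x) (f y)" and "f (ons_smult c x) = ons_smult c (f x)"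
    and "f (ons_br x y) = ons_br x (f y)"
  using assms unfolding ons_centroid_def ons_klinear_def by blast+

lemma ons_centroid_zero: "f \<in> ons_centroid \<Longrightarrow> f ons_zero = ons_zero"
  by (metis ons_centroidD(2) ons_smult_zero)

lemma ons_centroid_agree_on_lie_gen:
  assumes f: "f \<in> ons_centroid" and g: "g \<in> ons_centroid"
    and agree: "\<And>s. s \<in> S \<Longrightarrow> f s = g s" and x: "x \<in> ons_lie_gen S"
  shows "f x = g x"
  using x
proof (induction x rule: ons_lie_gen.induct)
  case (base x)
  then show ?case by (rule agree)
next
  case zero
  then show ?case
    using f g by (simp add: ons_centroid_zero)
qed (use f g in \<open>simp_all add: ons_centroidD\<close>)

lemma ons_centroid_on_basis:
  assumes f: "f \<in> ons_centroid"
  obtains p where "f ons_v0 = ons_pmult p ons_v0" "f ons_v1 = ons_pmult p ons_v1"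
    "f ons_v2 = ons_pmult p ons_v2"
proof -
  note sm = ons_centroidD(2)[OF f] and fbr = ons_centroidD(3)[OF f]
  have centralizes: "ons_br x (f x) = ons_zero" for x
    using fbr ons_br_self ons_centroid_zero[OF f] by metis
  obtain a0 b0 c0 where F0: "f ons_v0 = (a0, b0, c0)" by (cases "f ons_v0") auto
  obtain a1 b1 c1 where F1: "f ons_v1 = (a1, b1, c1)" by (cases "f ons_v1") auto
  obtain a2 b2 c2 where F2: "f ons_v2 = (a2, b2, c2)" by (cases "f ons_v2") auto
  have "b0 = 0 \<and> c0 = 0" "a1 = 0 \<and> c1 = 0" "a2 = 0 \<and> b2 = 0"
    using centralizes[of ons_v0] centralizes[of ons_v1] centralizes[of ons_v2] F0 F1 F2
    by (simp_all add: ons_br_def ons_v0_def ons_v1_def ons_v2_def ons_zero_def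
        del: mult_pCons_left mult_pCons_right)
  then have G0: "f ons_v0 = (a0, 0, 0)" and G1: "f ons_v1 = (0, b1, 0)"
    and G2: "f ons_v2 = (0, 0, c2)"
    using F0 F1 F2 by auto
  have "ons_v0 = ons_smult (-1) (ons_br ons_v1 ons_v2)"
    by (simp add: ons_br_def ons_v0_def ons_v1_def ons_v2_def ons_smult_def)
  then have "f ons_v0 = ons_smult (-1) (ons_br ons_v1 (f ons_v2))"
    using sm fbr by metis
  then have "c2 = a0"
    using G0 G2 by (simp add: ons_br_def ons_v1_def ons_smult_def)
  have "ons_br ons_v0 (f ons_v1) = ons_smult (-1) (ons_br ons_v1 (f ons_v0))"
    using fbr ons_br_anticomm sm by metis
  then have "b1 = a0"
    using G0 G1 by (simp add: ons_br_def ons_v1_def ons_v0_def ons_smult_def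
        del: mult_pCons_left mult_pCons_right)
  show thesis
    by (rule that[of a0])
      (use G0 G1 G2 \<open>b1 = a0\<close> \<open>c2 = a0\<close> in \<open>simp_all add: ons_pmult_def ons_v0_def ons_v1_def ons_v2_def\<close>)
qed

lemma ons_centroid_eq_range_pmult: "ons_centroid = range ons_pmult"
proof
  show "range ons_pmult \<subseteq> ons_centroid"
    using ons_pmult_in_centroid by blast
next
  show "ons_centroid \<subseteq> range ons_pmult"
  proof
    fix f
    assume f: "f \<in> ons_centroid"
    then obtain p where p: "f ons_v0 = ons_pmult p ons_v0" "f ons_v1 = ons_pmult p ons_v1"
      "f ons_v2 = ons_pmult p ons_v2"
      by (rule ons_centroid_on_basis)
    have "f x = ons_pmult p x" for x
    proof (rule ons_centroid_agree_on_lie_gen[OF f ons_pmult_in_centroid])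
      show "x \<in> ons_lie_gen {ons_v0, ons_v1, ons_v2}"
        by (simp add: ons_lie_gen_basis_eq_UNIV)
    qed (use p in auto)
    then have "f = ons_pmult p"
      by (rule ext)
    then show "f \<in> range ons_pmult"
      by simp
  qed
qed

lemma ons_ideal_br_closed: "ons_ideal I \<Longrightarrow> y \<in> I \<Longrightarrow> ons_br x y \<in> I"
  unfolding ons_ideal_def by blast

lemma ons_nonzero_ideal_contains_v0_multiple:
  assumes I: "ons_ideal I" and nonzero: "I \<noteq> {ons_zero}"
  obtains q where "q \<noteq> 0" "(q, 0, 0) \<in> I"
proof -
  obtain x where x: "x \<in> I" "x \<noteq> ons_zero"
    using I nonzero unfolding ons_ideal_def by blast
  obtain a b c where X: "x = (a, b, c)" by (cases x) auto
  have t: "[:0, 1:] \<noteq> (0 :: 'a poly)" and t1: "[:-1, 1:] \<noteq> (0 :: 'a poly)"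
    by simp_all
  consider "b \<noteq> 0" | "a \<noteq> 0" | "c \<noteq> 0"
    using x X by (auto simp: ons_zero_def)
  then show thesis
  proof cases
    case 1
    have "ons_br ons_v1 (ons_br ons_v0 x) = ([:-1, 1:] * b, 0, 0)"
      using X by (simp add: ons_br_def ons_v0_def ons_v1_def)
    then show thesis
      using that 1 t1 I x by (metis ons_ideal_br_closed mult_eq_0_iff)
  next
    case 2
    have "ons_br ons_v2 (ons_br ons_v0 (ons_br ons_v1 x)) = (- ([:0, 1:] * ([:-1, 1:] * a)), 0, 0)"
      using X by (simp add: ons_br_def ons_v0_def ons_v1_def ons_v2_def)
    then show thesis
      using that 2 t t1 I x by (metis ons_ideal_br_closed mult_eq_0_iff neg_equal_0_iff_equal)
  next
    case 3
    have "ons_br ons_v2 (ons_br ons_v2 (ons_br ons_v1 x)) = (- ([:0, 1:] * c), 0, 0)"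
      using X by (simp add: ons_br_def ons_v1_def ons_v2_def)
    then show thesis
      using that 3 t I x by (metis ons_ideal_br_closed mult_eq_0_iff neg_equal_0_iff_equal)
  qed
qed

lemma ons_is_prime: "ons_prime TYPE('a::field)"
  unfolding ons_prime_def
proof (intro allI impI)
  fix I J :: "'a ons set"
  assume I: "ons_ideal I" "I \<noteq> {ons_zero}" and J: "ons_ideal J" "J \<noteq> {ons_zero}"
  obtain q where q: "q \<noteq> 0" "(q, 0, 0) \<in> I"
    using I by (rule ons_nonzero_ideal_contains_v0_multiple)
  obtain r where r: "r \<noteq> 0" "(r, 0, 0) \<in> J"
    using J by (rule ons_nonzero_ideal_contains_v0_multiple)
  have "ons_br ons_v1 (r, 0, 0) = (0, 0, [:-1, 1:] * r)"
    by (simp add: ons_br_def ons_v1_def)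
  then have rJ: "(0, 0, [:-1, 1:] * r) \<in> J"
    using J r by (metis ons_ideal_br_closed)
  have "ons_br (q, 0, 0) (0, 0, [:-1, 1:] * r) \<in> ons_ideal_br I J"
    unfolding ons_ideal_br_def using q rJ by (blast intro: ons_kspan.base)
  moreover have "ons_br (q, 0, 0) (0, 0, [:-1, 1:] * r) = (0, - ([:0, 1:] * (q * ([:-1, 1:] * r))), 0)"
    by (simp add: ons_br_def)
  moreover have "(0, - ([:0, 1:] * (q * ([:-1, 1:] * r))), 0) \<noteq> ons_zero"
    using q r by (simp add: ons_zero_def del: mult_pCons_left mult_pCons_right)
  ultimately show "ons_ideal_br I J \<noteq> {ons_zero}"
    by force
qed

theorem lemma4p5:
  assumes "(2::'a::field) \<noteq> 0"
  shows "ons_lie_gen {ons_v0, ons_v1, ons_v2} = (UNIV :: 'a ons set) \<and>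
         bij_betw (\<lambda>p::'a poly. ons_pmult p) UNIV ons_centroid \<and>
         ons_prime TYPE('a)"
proof (intro conjI)
  show "ons_lie_gen {ons_v0, ons_v1, ons_v2} = (UNIV :: 'a ons set)"
    by (rule ons_lie_gen_basis_eq_UNIV)
  show "bij_betw (\<lambda>p::'a poly. ons_pmult p) UNIV ons_centroid"
    using inj_ons_pmult ons_centroid_eq_range_pmult by (auto simp: bij_betw_def)
  show "ons_prime TYPE('a)"
    by (rule ons_is_prime)
qed

end
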